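(* Let $c \geq 1$ and let $\Gamma \subset \mathbb{P}^c$ be a finite set of $d$ points in linear semi-uniform position. Then for each $m \geq 2$, $$h^0(\mathbb{P}^c, \mathcal{I}_\Gamma(m)) = \binom{c+m}{m} - d \ \text{ if } d \leq 2c+1, \qquad h^0(\mathbb{P}^c, \mathcal{I}_\Gamma(m)) \leq \binom{c+m}{m} - 2c - 1 \ \text{ if } d \geq 2c+2.$$ In particular, $h^0(\mathbb{P}^c, \mathcal{I}_\Gamma(2)) = \binom{c+1}{2} + c + 1 - d$ if $d \leq 2c+1$, and $h^0(\mathbb{P}^c, \mathcal{I}_\Gamma(2)) \leq \binom{c}{2}$ if $d \geq 2c+2$.
   Context: The ground field is algebraically closed of arbitrary characteristic. A finite set $\Gamma \subset \mathbb{P}^c$ is in linear semi-uniform position if it spans $\mathbb{P}^c$ and there are integers $\nu(i,\Gamma)$, $0 \leq i \leq c$, such that every $i$-dimensional linear subspace of $\mathbb{P}^c$ spanned by $i+1$ linearly independent points of $\Gamma$ contains exactly $\nu(i,\Gamma)$ points of $\Gamma$. $\mathcal{I}_\Gamma$ denotes the ideal sheaf of $\Gamma$. *)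

theory Defs
  imports "HOL-Analysis.Analysis" "HOL-Computational_Algebra.Polynomial"
    "HOL-Library.Function_Algebras"
begin

text \<open>Projective space P^c over a field 'k is modelled by nonzero vectors of 'k^'n,
  where CARD('n) = c + 1, up to nonzero scalars.\<close>

definition proj_point_set :: "('k::field ^ 'n) set \<Rightarrow> bool" where
  "proj_point_set \<Gamma> \<longleftrightarrow> finite \<Gamma> \<and> 0 \<notin> \<Gamma> \<and>
     (\<forall>p\<in>\<Gamma>. \<forall>q\<in>\<Gamma>. (\<exists>a. q = a *s p) \<longrightarrow> q = p)"

definition linear_semi_uniform_position :: "('k::field ^ 'n) set \<Rightarrow> bool" where
  "linear_semi_uniform_position \<Gamma> \<longleftrightarrow>
     vec.span \<Gamma> = UNIV \<and>
     (\<exists>\<nu> :: nat \<Rightarrow> nat. \<forall>i \<le> CARD('n) - 1. \<forall>S \<subseteq> \<Gamma>.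
        vec.independent S \<and> card S = i + 1 \<longrightarrow> card {p \<in> \<Gamma>. p \<in> vec.span S} = \<nu> i)"

text \<open>Homogeneous forms of degree m in the CARD('n) coordinates: coefficient functions on
  exponent vectors, supported on monomials of total degree m.\<close>

definition monomials_deg :: "nat \<Rightarrow> ('n::finite \<Rightarrow> nat) set" where
  "monomials_deg m = {e. (\<Sum>i\<in>UNIV. e i) = m}"

definition forms_deg :: "nat \<Rightarrow> (('n::finite \<Rightarrow> nat) \<Rightarrow> 'k::field) set" where
  "forms_deg m = {F. \<forall>e. e \<notin> monomials_deg m \<longrightarrow> F e = 0}"

definition eval_form :: "nat \<Rightarrow> (('n::finite \<Rightarrow> nat) \<Rightarrow> 'k::field) \<Rightarrow> 'k ^ 'n \<Rightarrow> 'k" where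
  "eval_form m F x = (\<Sum>e\<in>monomials_deg m. F e * (\<Prod>i\<in>UNIV. (x $ i) ^ e i))"

interpretation coeff_vs: vector_space "\<lambda>(a::'k::field) (f::'b \<Rightarrow> 'k). (\<lambda>x. a * f x)"
  by unfold_locales (auto simp: fun_eq_iff algebra_simps)

definition h0_ideal_sheaf :: "('k::field ^ 'n::finite) set \<Rightarrow> nat \<Rightarrow> nat" where
  "h0_ideal_sheaf \<Gamma> m =
     coeff_vs.dim {F :: ('n \<Rightarrow> nat) \<Rightarrow> 'k. F \<in> forms_deg m \<and> (\<forall>p\<in>\<Gamma>. eval_form m F p = 0)}"

end

theory Submission
  imports Defs
begin

text \<open>h0(I_\<Gamma>(m)) is the dimension of the space of degree-m forms minus the rank of their
  evaluation at \<Gamma>.  That rank is at least the length of any triangular system on \<Gamma>: points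
  p_1, ..., p_l with forms F_i such that F_i(p_i) \<noteq> 0 and F_i(p_j) = 0 for j > i.  Such systems
  of quadrics are built along a flag of spans of independent points S_0 \<subset> S_1 \<subset> ... of \<Gamma>:
  the points of \<Gamma> new in the span of S_(r+1) are reached through a basis B of them, each b \<in> B
  getting the product of a linear form vanishing on the span of S_r and one vanishing on
  B - {b}.  Semi-uniformity (if adding a point gains just one point of \<Gamma>, the points are in
  general position; an excess of points in some span persists in all larger ones) shows that
  the span of r + 1 points carries a system of length min (\<nu> r) (2r + 1), so \<Gamma> carries one of
  length min d (2c + 1); multiplying by powers of a coordinate lifts it to any degree m \<ge> 2.
  When d \<le> 2c + 1 the system covers \<Gamma> and the bound is an equality.\<close>

section \<open>Forms of degree m\<close>

lemma sum_fun_apply: "(sum f A) x = (\<Sum>a\<in>A. f a x)"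
  by (induction A rule: infinite_finite_induct) auto

lemma finite_monomials_deg: "finite (monomials_deg m :: ('n::finite \<Rightarrow> nat) set)"
proof -
  have "e i \<le> m" if "e \<in> monomials_deg m" for e :: "'n \<Rightarrow> nat" and i
    using that member_le_sum[of i UNIV e] unfolding monomials_deg_def by simp
  then have "monomials_deg m \<subseteq> Pi\<^sub>E UNIV (\<lambda>_::'n. {..m})"
    by (auto simp: PiE_UNIV_domain)
  moreover have "finite (Pi\<^sub>E UNIV (\<lambda>_::'n. {..m}))" by (intro finite_PiE) auto
  ultimately show ?thesis by (rule finite_subset)
qed

text \<open>Listing the exponents along an enumeration of the variables identifies monomials of
  degree m with the lists of length CARD('n) summing to m.\<close>

lemma card_monomials_deg:
  "card (monomials_deg m :: ('n::finite \<Rightarrow> nat) set) = (m + CARD('n) - 1) choose m"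
proof -
  obtain g :: "nat \<Rightarrow> 'n" where g: "bij_betw g {0..<CARD('n)} UNIV"
    using ex_bij_betw_nat_finite[of "UNIV :: 'n set"] by auto
  define \<phi> where "\<phi> e = map (e \<circ> g) [0..<CARD('n)]" for e :: "'n \<Rightarrow> nat"
  have sum_list_\<phi>: "sum_list (\<phi> e) = sum e UNIV" for e
  proof -
    have "sum_list (\<phi> e) = (\<Sum>j\<in>{0..<CARD('n)}. e (g j))"
      unfolding \<phi>_def by (simp add: sum_list_sum_nth)
    also have "\<dots> = sum e UNIV" using sum.reindex_bij_betw[OF g, of e] by simp
    finally show ?thesis .
  qed
  have "bij_betw \<phi> (monomials_deg m) {l. length l = CARD('n) \<and> sum_list l = m}"
  proof (rule bij_betwI'[where f = \<phi>])
    fix x y :: "'n \<Rightarrow> nat"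
    show "(\<phi> x = \<phi> y) = (x = y)"
    proof
      assume eq: "\<phi> x = \<phi> y"
      show "x = y"
      proof
        fix i
        obtain j where "j < CARD('n)" "i = g j" using g unfolding bij_betw_def by force
        moreover have "(\<phi> x) ! j = (\<phi> y) ! j" using eq by simp
        ultimately show "x i = y i" unfolding \<phi>_def by simp
      qed
    qed simp
  next
    fix x :: "'n \<Rightarrow> nat" assume "x \<in> monomials_deg m"
    then show "\<phi> x \<in> {l. length l = CARD('n) \<and> sum_list l = m}"
      by (simp add: sum_list_\<phi> monomials_deg_def) (simp add: \<phi>_def)
  next
    fix l assume l: "l \<in> {l. length l = CARD('n) \<and> sum_list l = m}"
    define e where "e i = l ! (inv_into {0..<CARD('n)} g i)" for i
    have "\<phi> e = l" unfolding \<phi>_def e_def using l g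
      by (auto intro!: nth_equalityI simp: bij_betw_inv_into_left)
    then show "\<exists>x\<in>monomials_deg m. l = \<phi> x" using l sum_list_\<phi>
      by (metis (mono_tags, lifting) mem_Collect_eq monomials_deg_def)
  qed
  then have "card (monomials_deg m :: ('n \<Rightarrow> nat) set) =
      card {l. length l = CARD('n) \<and> sum_list l = m}"
    by (rule bij_betw_same_card)
  also have "\<dots> = (m + CARD('n) - 1) choose m" by (rule card_length_sum_list)
  finally show ?thesis .
qed

lemma subspace_forms_deg: "coeff_vs.subspace (forms_deg m :: (('n::finite \<Rightarrow> nat) \<Rightarrow> 'k::field) set)"
  by (rule coeff_vs.subspaceI) (auto simp: forms_deg_def)

definition monomial_form :: "('n \<Rightarrow> nat) \<Rightarrow> ('n \<Rightarrow> nat) \<Rightarrow> 'k::field" where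
  "monomial_form e = (\<lambda>e'. if e' = e then 1 else 0)"

lemma inj_monomial_form: "inj (monomial_form :: ('n \<Rightarrow> nat) \<Rightarrow> _ \<Rightarrow> 'k::field)"
  by (rule injI) (metis monomial_form_def zero_neq_one)

lemma card_monomial_forms:
  "card ((monomial_form :: ('n::finite \<Rightarrow> nat) \<Rightarrow> _ \<Rightarrow> 'k::field) ` monomials_deg m) = card (monomials_deg m :: ('n \<Rightarrow> nat) set)"
  by (rule card_image[OF inj_on_subset[OF inj_monomial_form subset_UNIV]])

lemma forms_deg_eq_span:
  "forms_deg m = coeff_vs.span ((monomial_form :: ('n::finite \<Rightarrow> nat) \<Rightarrow> _ \<Rightarrow> 'k::field) ` monomials_deg m)"
proof
  show "forms_deg m \<subseteq> coeff_vs.span ((monomial_form :: ('n \<Rightarrow> nat) \<Rightarrow> _ \<Rightarrow> 'k) ` monomials_deg m)"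
  proof
    fix F :: "('n \<Rightarrow> nat) \<Rightarrow> 'k" assume F: "F \<in> forms_deg m"
    have "F = (\<Sum>e\<in>monomials_deg m. (\<lambda>x. F e * monomial_form e x))"
    proof
      fix x
      have "(\<Sum>e\<in>monomials_deg m. (\<lambda>x. F e * monomial_form e x)) x =
          (if x \<in> monomials_deg m then F x else 0)"
        by (simp add: sum_fun_apply monomial_form_def finite_monomials_deg if_distrib cong: if_cong)
      also have "\<dots> = F x" using F by (auto simp: forms_deg_def)
      finally show "F x = (\<Sum>e\<in>monomials_deg m. (\<lambda>x. F e * monomial_form e x)) x" by simp
    qed
    also have "\<dots> \<in> coeff_vs.span (monomial_form ` monomials_deg m)"
      by (intro coeff_vs.span_sum coeff_vs.span_scale coeff_vs.span_base) auto
    finally show "F \<in> coeff_vs.span (monomial_form ` monomials_deg m)" .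
  qed
  show "coeff_vs.span ((monomial_form :: ('n \<Rightarrow> nat) \<Rightarrow> _ \<Rightarrow> 'k) ` monomials_deg m) \<subseteq> forms_deg m"
    by (rule coeff_vs.span_minimal[OF _ subspace_forms_deg])
      (auto simp: forms_deg_def monomial_form_def)
qed

lemma independent_monomial_forms:
  "coeff_vs.independent ((monomial_form :: ('n::finite \<Rightarrow> nat) \<Rightarrow> _ \<Rightarrow> 'k::field) ` monomials_deg m)"
proof (rule coeff_vs.independent_if_scalars_zero)
  show "finite ((monomial_form :: ('n \<Rightarrow> nat) \<Rightarrow> _ \<Rightarrow> 'k) ` monomials_deg m)"
    by (simp add: finite_monomials_deg)
  fix f :: "(('n \<Rightarrow> nat) \<Rightarrow> 'k) \<Rightarrow> 'k" and x :: "('n \<Rightarrow> nat) \<Rightarrow> 'k"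
  assume eq: "(\<Sum>x\<in>monomial_form ` monomials_deg m. (\<lambda>y. f x * x y)) = 0"
    and x: "x \<in> monomial_form ` monomials_deg m"
  then obtain e where e: "x = monomial_form e" "e \<in> monomials_deg m" by auto
  have "0 = (\<Sum>x\<in>monomial_form ` monomials_deg m. (\<lambda>y. f x * x y)) e"
    using eq by simp
  also have "\<dots> = (\<Sum>e'\<in>monomials_deg m. f (monomial_form e') * monomial_form e' e)"
    by (simp add: sum_fun_apply sum.reindex[OF inj_on_subset[OF inj_monomial_form]])
  also have "\<dots> = f (monomial_form e)"
    using e by (simp add: monomial_form_def finite_monomials_deg if_distrib cong: if_cong)
  finally show "f x = 0" using e by simp
qed

lemma dim_forms_deg:
  "coeff_vs.dim (forms_deg m :: (('n::finite \<Rightarrow> nat) \<Rightarrow> 'k::field) set) = card (monomials_deg m :: ('n \<Rightarrow> nat) set)"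
  by (metis coeff_vs.dim_span_eq_card_independent independent_monomial_forms
      forms_deg_eq_span card_monomial_forms)

lemma eval_form_add: "eval_form m (F + G) p = eval_form m F p + eval_form m G p"
  by (simp add: eval_form_def sum.distrib algebra_simps)

lemma eval_form_scale: "eval_form m (\<lambda>x. a * F x) p = a * eval_form m F p"
  by (simp add: eval_form_def sum_distrib_left algebra_simps)

lemma eval_form_zero: "eval_form m 0 p = 0"
  by (simp add: eval_form_def)

lemma eval_form_diff: "eval_form m (F - G) p = eval_form m F p - eval_form m G p"
  by (simp add: eval_form_def sum_subtractf algebra_simps)

lemma eval_form_span_eq_0:
  assumes "\<forall>G\<in>A. eval_form m G p = 0" and "F \<in> coeff_vs.span A"
  shows "eval_form m F p = 0"
proof -
  have "coeff_vs.subspace {F. eval_form m F p = 0}"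
    by (rule coeff_vs.subspaceI) (auto simp: eval_form_add eval_form_scale eval_form_zero)
  then show ?thesis using coeff_vs.span_minimal[of A "{F. eval_form m F p = 0}"] assms by auto
qed

section \<open>Triangular systems\<close>

text \<open>The length of a triangular system bounds from below the rank of the evaluation of
  degree-m forms at its points.\<close>

fun triangular :: "nat \<Rightarrow> (('k::field ^ 'n::finite) \<times> (('n \<Rightarrow> nat) \<Rightarrow> 'k)) list \<Rightarrow> bool" where
  "triangular m [] = True"
| "triangular m ((p, F) # xs) \<longleftrightarrow> triangular m xs \<and> F \<in> forms_deg m \<and> eval_form m F p \<noteq> 0 \<and>
     (\<forall>q\<in>fst ` set xs. eval_form m F q = 0)"

lemma triangular_forms_deg: "triangular m xs \<Longrightarrow> snd ` set xs \<subseteq> forms_deg m"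
  by (induction xs rule: triangular.induct) auto

lemma triangular_distinct: "triangular m xs \<Longrightarrow> distinct (map fst xs)"
  by (induction xs rule: triangular.induct) force+

lemma triangular_append:
  "triangular m ys \<Longrightarrow> triangular m xs \<Longrightarrow> \<forall>F\<in>snd ` set ys. \<forall>q\<in>fst ` set xs. eval_form m F q = 0 \<Longrightarrow>
    triangular m (ys @ xs)"
  by (induction ys rule: triangular.induct) auto

lemma triangular_map_diagonal:
  assumes "distinct l"
    and "\<forall>b\<in>set l. F b \<in> forms_deg m \<and> eval_form m (F b) b \<noteq> 0 \<and>
      (\<forall>b'\<in>set l. b' \<noteq> b \<longrightarrow> eval_form m (F b) b' = 0)"
  shows "triangular m (map (\<lambda>b. (b, F b)) l)"
  using assms by (induction l) (auto simp: image_image)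

lemma triangular_independent:
  assumes "triangular m xs" and "coeff_vs.independent A" and "finite A"
    and "\<forall>G\<in>A. \<forall>q\<in>fst ` set xs. eval_form m G q = 0"
  shows "coeff_vs.independent (A \<union> snd ` set xs) \<and> card (A \<union> snd ` set xs) = card A + length xs"
  using assms
proof (induction m xs arbitrary: A rule: triangular.induct)
  case (1 m)
  then show ?case by simp
next
  case (2 m p F xs)
  have "F \<notin> coeff_vs.span A"
    using eval_form_span_eq_0[of A m p F] "2.prems" by auto
  then have ind: "coeff_vs.independent (insert F A)" and F_notin: "F \<notin> A"
    using coeff_vs.independent_insertI[OF _ "2.prems"(2)] coeff_vs.span_base[of F A] by auto
  have "coeff_vs.independent (insert F A \<union> snd ` set xs) \<and>
        card (insert F A \<union> snd ` set xs) = card (insert F A) + length xs"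
    using "2.IH"[OF _ ind] "2.prems" by auto
  moreover have "insert F A \<union> snd ` set xs = A \<union> snd ` set ((p, F) # xs)" by auto
  moreover have "card (insert F A) = Suc (card A)" using F_notin "2.prems"(3) by simp
  ultimately show ?case by simp
qed

text \<open>Back substitution: the head form corrects the value at the head point without changing
  the values further down the list, where it vanishes.\<close>

lemma triangular_interpolate:
  assumes "triangular m xs"
  shows "\<exists>G\<in>coeff_vs.span (snd ` set xs). \<forall>q\<in>fst ` set xs. eval_form m F q = eval_form m G q"
  using assms
proof (induction m xs rule: triangular.induct)
  case (1 m)
  then show ?case by simp
next
  case (2 m p Fp xs)
  then obtain G' where G': "G' \<in> coeff_vs.span (snd ` set xs)"
    "\<forall>q\<in>fst ` set xs. eval_form m F q = eval_form m G' q"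
    by auto
  define c where "c = (eval_form m F p - eval_form m G' p) / eval_form m Fp p"
  define G where "G = G' + (\<lambda>x. c * Fp x)"
  have "G' \<in> coeff_vs.span (snd ` set ((p, Fp) # xs))"
    using G'(1) coeff_vs.span_mono[of "snd ` set xs"] by auto
  moreover have "(\<lambda>x. c * Fp x) \<in> coeff_vs.span (snd ` set ((p, Fp) # xs))"
    by (intro coeff_vs.span_scale coeff_vs.span_base) simp
  ultimately have G_span: "G \<in> coeff_vs.span (snd ` set ((p, Fp) # xs))"
    unfolding G_def by (rule coeff_vs.span_add)
  have "eval_form m G q = eval_form m G' q + c * eval_form m Fp q" for q
    by (simp add: G_def eval_form_add eval_form_scale)
  then have "\<forall>q\<in>fst ` set ((p, Fp) # xs). eval_form m F q = eval_form m G q"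
    using G'(2) "2.prems" by (auto simp: c_def)
  then show ?case using G_span by blast
qed

definition vanishing_forms :: "('k::field ^ 'n::finite) set \<Rightarrow> nat \<Rightarrow> (('n \<Rightarrow> nat) \<Rightarrow> 'k) set" where
  "vanishing_forms \<Gamma> m = {F. F \<in> forms_deg m \<and> (\<forall>p\<in>\<Gamma>. eval_form m F p = 0)}"

lemma obtain_vanishing_forms_basis:
  fixes \<Gamma> :: "('k::field ^ 'n::finite) set"
  obtains B where "B \<subseteq> vanishing_forms \<Gamma> m" "coeff_vs.independent B" "finite B"
    "vanishing_forms \<Gamma> m \<subseteq> coeff_vs.span B" "card B = h0_ideal_sheaf \<Gamma> m"
proof -
  obtain B where B: "B \<subseteq> vanishing_forms \<Gamma> m" "coeff_vs.independent B"
    "vanishing_forms \<Gamma> m \<subseteq> coeff_vs.span B" "card B = coeff_vs.dim (vanishing_forms \<Gamma> m)"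
    using coeff_vs.basis_exists by blast
  have "B \<subseteq> coeff_vs.span ((monomial_form :: ('n \<Rightarrow> nat) \<Rightarrow> _ \<Rightarrow> 'k) ` monomials_deg m)"
    using B(1) forms_deg_eq_span by (auto simp: vanishing_forms_def)
  then have "finite B"
    using coeff_vs.independent_span_bound[OF _ B(2)] finite_monomials_deg by blast
  moreover have "card B = h0_ideal_sheaf \<Gamma> m"
    using B(4) by (simp add: h0_ideal_sheaf_def vanishing_forms_def)
  ultimately show thesis using that B by blast
qed

lemma h0_ideal_sheaf_add_length_le:
  fixes \<Gamma> :: "('k::field ^ 'n::finite) set"
  assumes "triangular m xs" and "fst ` set xs \<subseteq> \<Gamma>"
  shows "h0_ideal_sheaf \<Gamma> m + length xs \<le> card (monomials_deg m :: ('n \<Rightarrow> nat) set)"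
proof -
  obtain B where B: "B \<subseteq> vanishing_forms \<Gamma> m" "coeff_vs.independent B" "finite B"
    "card B = h0_ideal_sheaf \<Gamma> m"
    by (rule obtain_vanishing_forms_basis)
  have "\<forall>G\<in>B. \<forall>q\<in>fst ` set xs. eval_form m G q = 0"
    using B(1) assms(2) by (auto simp: vanishing_forms_def)
  note B_xs = triangular_independent[OF assms(1) B(2,3) this]
  have "B \<union> snd ` set xs \<subseteq> coeff_vs.span ((monomial_form :: ('n \<Rightarrow> nat) \<Rightarrow> _ \<Rightarrow> 'k) ` monomials_deg m)"
    using B(1) triangular_forms_deg[OF assms(1)]
    by (auto simp: vanishing_forms_def forms_deg_eq_span[symmetric])
  then have "card (B \<union> snd ` set xs) \<le> card ((monomial_form :: ('n \<Rightarrow> nat) \<Rightarrow> _ \<Rightarrow> 'k) ` monomials_deg m)"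
    using coeff_vs.independent_span_bound B_xs finite_monomials_deg by blast
  then show ?thesis using B_xs B(4) card_monomial_forms[where 'k='k and 'n='n] by simp
qed

lemma card_monomials_deg_le_h0_ideal_sheaf_add_length:
  fixes \<Gamma> :: "('k::field ^ 'n::finite) set"
  assumes "triangular m xs" and "\<Gamma> \<subseteq> fst ` set xs"
  shows "card (monomials_deg m :: ('n \<Rightarrow> nat) set) \<le> h0_ideal_sheaf \<Gamma> m + length xs"
proof -
  obtain B where B: "coeff_vs.independent B" "finite B"
    "vanishing_forms \<Gamma> m \<subseteq> coeff_vs.span B" "card B = h0_ideal_sheaf \<Gamma> m"
    by (rule obtain_vanishing_forms_basis)
  have "forms_deg m \<subseteq> coeff_vs.span (B \<union> snd ` set xs)"
  proof
    fix F :: "('n \<Rightarrow> nat) \<Rightarrow> 'k" assume F: "F \<in> forms_deg m"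
    obtain G where G: "G \<in> coeff_vs.span (snd ` set xs)"
      "\<forall>q\<in>fst ` set xs. eval_form m F q = eval_form m G q"
      using triangular_interpolate[OF assms(1)] by blast
    have "G \<in> forms_deg m"
      using coeff_vs.span_minimal[OF triangular_forms_deg[OF assms(1)] subspace_forms_deg] G(1) by auto
    then have "F - G \<in> vanishing_forms \<Gamma> m"
      using F G(2) assms(2) coeff_vs.subspace_diff[OF subspace_forms_deg]
      by (auto simp: vanishing_forms_def eval_form_diff)
    then have "F - G \<in> coeff_vs.span (B \<union> snd ` set xs)"
      using B(3) coeff_vs.span_mono[of B "B \<union> snd ` set xs"] by auto
    moreover have "G \<in> coeff_vs.span (B \<union> snd ` set xs)"
      using G(1) coeff_vs.span_mono[of "snd ` set xs" "B \<union> snd ` set xs"] by auto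
    ultimately have "(F - G) + G \<in> coeff_vs.span (B \<union> snd ` set xs)"
      by (rule coeff_vs.span_add)
    then show "F \<in> coeff_vs.span (B \<union> snd ` set xs)" by simp
  qed
  then have "coeff_vs.dim (forms_deg m :: (('n \<Rightarrow> nat) \<Rightarrow> 'k) set) \<le> card (B \<union> snd ` set xs)"
    by (rule coeff_vs.dim_le_card) (simp add: B(2))
  also have "\<dots> \<le> card B + length xs"
    using card_Un_le[of B "snd ` set xs"] card_image_le[of "set xs" snd] card_length[of xs] by simp
  finally show ?thesis using B(4) dim_forms_deg[where 'k='k and 'n='n] by simp
qed

definition form_function :: "nat \<Rightarrow> ('k::field ^ 'n::finite \<Rightarrow> 'k) \<Rightarrow> bool" where
  "form_function m f \<longleftrightarrow> (\<exists>F\<in>forms_deg m. \<forall>x. eval_form m F x = f x)"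

lemma form_function_zero: "form_function m (\<lambda>x. 0)"
  unfolding form_function_def by (rule bexI[of _ 0]) (auto simp: forms_deg_def eval_form_zero)

lemma form_function_add:
  assumes "form_function m f" and "form_function m g"
  shows "form_function m (\<lambda>x. f x + g x)"
proof -
  obtain F G where "F \<in> forms_deg m" "\<forall>x. eval_form m F x = f x"
    and "G \<in> forms_deg m" "\<forall>x. eval_form m G x = g x"
    using assms unfolding form_function_def by blast
  then show ?thesis unfolding form_function_def
    by (intro bexI[of _ "F + G"]) (auto simp: eval_form_add forms_deg_def)
qed

lemma form_function_scale:
  assumes "form_function m f"
  shows "form_function m (\<lambda>x. a * f x)"
proof -
  obtain F where "F \<in> forms_deg m" "\<forall>x. eval_form m F x = f x"
    using assms unfolding form_function_def by blast
  then show ?thesis unfolding form_function_def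
    by (intro bexI[of _ "\<lambda>e. a * F e"]) (auto simp: eval_form_scale forms_deg_def)
qed

lemma form_function_sum:
  "(\<And>i. i \<in> I \<Longrightarrow> form_function m (f i)) \<Longrightarrow> form_function m (\<lambda>x. \<Sum>i\<in>I. f i x)"
  by (induction I rule: infinite_finite_induct) (auto intro: form_function_zero form_function_add)

lemma form_function_one: "form_function 0 (\<lambda>x::'k::field ^ 'n::finite. 1)"
proof -
  have "monomials_deg 0 = {(\<lambda>_. 0) :: 'n \<Rightarrow> nat}"
    by (auto simp: monomials_deg_def)
  then show ?thesis unfolding form_function_def
    by (intro bexI[of _ "monomial_form (\<lambda>_. 0)"])
      (auto simp: eval_form_def monomial_form_def forms_deg_def)
qed

lemma sum_fun_upd_UNIV:
  fixes e :: "'n::finite \<Rightarrow> nat"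
  shows "(\<Sum>j\<in>UNIV. (e(i := k)) j) = k + (\<Sum>j\<in>UNIV. e j) - e i"
proof -
  have "(\<Sum>j\<in>UNIV. (e(i := k)) j) = k + (\<Sum>j\<in>UNIV - {i}. e j)"
    by (simp add: sum.remove[of UNIV i])
  moreover have "(\<Sum>j\<in>UNIV. e j) = e i + (\<Sum>j\<in>UNIV - {i}. e j)"
    by (simp add: sum.remove[of UNIV i])
  ultimately show ?thesis by simp
qed

lemma prod_power_fun_upd_Suc:
  fixes e :: "'n::finite \<Rightarrow> nat" and x :: "'k::field ^ 'n"
  shows "(\<Prod>j\<in>UNIV. (x $ j) ^ ((e(i := Suc (e i))) j)) = x $ i * (\<Prod>j\<in>UNIV. (x $ j) ^ (e j))"
proof -
  have "(\<Prod>j\<in>UNIV. (x $ j) ^ ((e(i := Suc (e i))) j)) =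
      (x $ i) ^ Suc (e i) * (\<Prod>j\<in>UNIV - {i}. (x $ j) ^ (e j))"
    by (simp add: prod.remove[of UNIV i])
  moreover have "(\<Prod>j\<in>UNIV. (x $ j) ^ (e j)) = (x $ i) ^ e i * (\<Prod>j\<in>UNIV - {i}. (x $ j) ^ (e j))"
    by (simp add: prod.remove[of UNIV i])
  ultimately show ?thesis by simp
qed

lemma bij_betw_monomials_deg_Suc:
  "bij_betw (\<lambda>e. e(i := Suc (e i))) (monomials_deg m :: ('n::finite \<Rightarrow> nat) set)
     {e \<in> monomials_deg (Suc m). 0 < e i}"
proof (rule bij_betwI[where g = "\<lambda>e. e(i := e i - 1)"])
  have "sum (e(i := Suc (e i))) UNIV = Suc (sum e UNIV)" for e :: "'n \<Rightarrow> nat"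
    using sum_fun_upd_UNIV[of e i "Suc (e i)"] member_le_sum[of i UNIV e] by simp
  then show "(\<lambda>e. e(i := Suc (e i))) \<in> monomials_deg m \<rightarrow> {e \<in> monomials_deg (Suc m). 0 < e i}"
    unfolding monomials_deg_def by auto
  have "sum (e(i := e i - 1)) UNIV = sum e UNIV - 1" if "0 < e i" for e :: "'n \<Rightarrow> nat"
    using sum_fun_upd_UNIV[of e i "e i - 1"] member_le_sum[of i UNIV e] that by simp
  then show "(\<lambda>e. e(i := e i - 1)) \<in> {e \<in> monomials_deg (Suc m). 0 < e i} \<rightarrow> monomials_deg m"
    unfolding monomials_deg_def by auto
qed auto

lemma form_function_mult_coord:
  fixes f :: "'k::field ^ 'n::finite \<Rightarrow> 'k"
  assumes "form_function m f"
  shows "form_function (Suc m) (\<lambda>x. x $ i * f x)"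
proof -
  obtain F where F: "F \<in> forms_deg m" "\<forall>x. eval_form m F x = f x"
    using assms form_function_def by blast
  define G where "G e = (if 0 < e i then F (e(i := e i - 1)) else 0)" for e :: "'n \<Rightarrow> nat"
  have "G \<in> forms_deg (Suc m)"
    unfolding forms_deg_def
  proof (intro CollectI allI impI)
    fix e :: "'n \<Rightarrow> nat" assume e: "e \<notin> monomials_deg (Suc m)"
    show "G e = 0"
    proof (cases "0 < e i")
      case True
      have "e(i := e i - 1) \<notin> monomials_deg m"
      proof
        assume "e(i := e i - 1) \<in> monomials_deg m"
        then have "(e(i := e i - 1))(i := Suc ((e(i := e i - 1)) i)) \<in> monomials_deg (Suc m)"
          using bij_betw_apply[OF bij_betw_monomials_deg_Suc] by blast
        then show False using e True by simp
      qed
      then show ?thesis using F(1) True by (simp add: G_def forms_deg_def)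
    qed (simp add: G_def)
  qed
  moreover have "eval_form (Suc m) G x = x $ i * f x" for x
  proof -
    have "eval_form (Suc m) G x =
        (\<Sum>e\<in>{e \<in> monomials_deg (Suc m). 0 < e i}. G e * (\<Prod>j\<in>UNIV. (x $ j) ^ e j))"
      unfolding eval_form_def
      by (rule sum.mono_neutral_right) (auto simp: finite_monomials_deg G_def)
    also have "\<dots> = (\<Sum>e\<in>monomials_deg m.
        G (e(i := Suc (e i))) * (\<Prod>j\<in>UNIV. (x $ j) ^ (e(i := Suc (e i))) j))"
      by (rule sum.reindex_bij_betw[OF bij_betw_monomials_deg_Suc, symmetric])
    also have "\<dots> = (\<Sum>e\<in>monomials_deg m. x $ i * (F e * (\<Prod>j\<in>UNIV. (x $ j) ^ e j)))"
      by (simp add: G_def prod_power_fun_upd_Suc mult.left_commute fun_upd_same del: fun_upd_apply)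
    also have "\<dots> = x $ i * eval_form m F x"
      by (simp add: eval_form_def sum_distrib_left)
    finally show ?thesis using F(2) by simp
  qed
  ultimately show ?thesis unfolding form_function_def by blast
qed

lemma form_function_mult_coord_power:
  "form_function m f \<Longrightarrow> form_function (m + k) (\<lambda>x. (x $ i) ^ k * f x)"
proof (induction k)
  case (Suc k)
  then have "form_function (Suc (m + k)) (\<lambda>x. x $ i * ((x $ i) ^ k * f x))"
    by (intro form_function_mult_coord)
  then show ?case by (simp add: mult.assoc)
qed simp

definition vec_dot :: "'k::field ^ 'n::finite \<Rightarrow> 'k ^ 'n \<Rightarrow> 'k" where
  "vec_dot h x = (\<Sum>j\<in>UNIV. h $ j * x $ j)"

lemma form_function_mult_vec_dot:
  assumes "form_function m f"
  shows "form_function (Suc m) (\<lambda>x. vec_dot h x * f x)"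
proof -
  have "form_function (Suc m) (\<lambda>x. \<Sum>j\<in>UNIV. h $ j * (x $ j * f x))"
    using assms by (intro form_function_sum form_function_scale form_function_mult_coord)
  then show ?thesis by (simp add: vec_dot_def sum_distrib_right mult.assoc)
qed

section \<open>Separating points by quadrics\<close>

lemma exists_vec_dot_separating:
  fixes p :: "'k::field ^ 'n::finite"
  assumes "p \<notin> vec.span A"
  shows "\<exists>h. (\<forall>a\<in>vec.span A. vec_dot h a = 0) \<and> vec_dot h p \<noteq> 0"
proof -
  obtain B where B: "B \<subseteq> A" "vec.independent B" "A \<subseteq> vec.span B"
    using vec.maximal_independent_subset by blast
  have span_eq: "vec.span A = vec.span B"
    using B by (metis subset_antisym vec.span_mono vec.span_minimal vec.subspace_span vec.span_span)
  have "vec.independent (insert p B)"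
    using vec.independent_insertI[OF _ B(2)] assms span_eq by simp
  obtain i0 :: 'n where True by simp
  obtain g where g: "Vector_Spaces.linear (*s) (*s) g"
    "\<forall>x\<in>insert p B. g x = (if x = p then axis i0 1 else 0)"
    using vec.linear_independent_extend[OF \<open>vec.independent (insert p B)\<close>,
        of "\<lambda>x. if x = p then axis i0 1 else 0"]
    by blast
  define h :: "'k ^ 'n" where "h = (\<chi> j. g (axis j 1) $ i0)"
  have vec_dot_h: "vec_dot h x = g x $ i0" for x
    unfolding vec_dot_def h_def using linear_componentwise[OF g(1), of x i0]
    by (simp add: mult.commute)
  have "p \<notin> B" using assms B(1) vec.span_base by blast
  then have "g x = 0" if "x \<in> B" for x using g(2) that by auto
  then have "g a = 0" if "a \<in> vec.span A" for a
    using vec.linear_eq_0_on_span[OF g(1), of B a] that span_eq by auto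
  moreover have "g p $ i0 = 1" using g(2) by (simp add: axis_def)
  ultimately show ?thesis using vec_dot_h by (intro exI[of _ h]) auto
qed

text \<open>The product of two linear forms, each cutting out one of the spans but not p.\<close>

lemma exists_quadric_separating:
  fixes p :: "'k::field ^ 'n::finite"
  assumes "p \<notin> vec.span U" and "p \<notin> vec.span V"
  shows "\<exists>F\<in>forms_deg 2. eval_form 2 F p \<noteq> 0 \<and> (\<forall>x\<in>vec.span U \<union> vec.span V. eval_form 2 F x = 0)"
proof -
  obtain h1 where h1: "\<forall>a\<in>vec.span U. vec_dot h1 a = 0" "vec_dot h1 p \<noteq> 0"
    using exists_vec_dot_separating[OF assms(1)] by blast
  obtain h2 where h2: "\<forall>a\<in>vec.span V. vec_dot h2 a = 0" "vec_dot h2 p \<noteq> 0"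
    using exists_vec_dot_separating[OF assms(2)] by blast
  have "form_function (Suc (Suc 0)) (\<lambda>x. vec_dot h1 x * (vec_dot h2 x * 1))"
    by (intro form_function_mult_vec_dot form_function_one)
  then obtain F where "F \<in> forms_deg 2" "\<forall>x. eval_form 2 F x = vec_dot h1 x * vec_dot h2 x"
    unfolding form_function_def by (auto simp: numeral_2_eq_2)
  then show ?thesis using h1 h2 by (intro bexI[of _ F]) auto
qed

lemma triangular_extend_independent:
  fixes B :: "('k::field ^ 'n::finite) set"
  assumes "triangular 2 xs" and "fst ` set xs \<subseteq> vec.span U"
    and "vec.independent B" and "finite B" and "\<forall>b\<in>B. b \<notin> vec.span U"
  shows "\<exists>ys. triangular 2 ys \<and> fst ` set ys = B \<union> fst ` set xs \<and> length ys = card B + length xs"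
proof -
  have "\<exists>F\<in>forms_deg 2. eval_form 2 F b \<noteq> 0 \<and>
      (\<forall>x\<in>vec.span U \<union> vec.span (B - {b}). eval_form 2 F x = 0)" if "b \<in> B" for b
    using that assms(3,5) vec.dependent_def by (intro exists_quadric_separating) auto
  then obtain F where F: "\<And>b. b \<in> B \<Longrightarrow> F b \<in> forms_deg 2 \<and> eval_form 2 (F b) b \<noteq> 0 \<and>
      (\<forall>x\<in>vec.span U \<union> vec.span (B - {b}). eval_form 2 (F b) x = 0)"
    by metis
  obtain l where l: "distinct l" "set l = B" using finite_distinct_list[OF assms(4)] by blast
  have "eval_form 2 (F b) b' = 0" if "b \<in> B" "b' \<in> B" "b' \<noteq> b" for b b'
    using F[OF that(1)] vec.span_base[of b' "B - {b}"] that by blast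
  then have "triangular 2 (map (\<lambda>b. (b, F b)) l)"
    using l F by (intro triangular_map_diagonal) auto
  then have "triangular 2 (map (\<lambda>b. (b, F b)) l @ xs)"
    using assms(1,2) l F by (intro triangular_append) auto
  moreover have "length (map (\<lambda>b. (b, F b)) l @ xs) = card B + length xs"
    using l distinct_card by fastforce
  ultimately show ?thesis using l by (intro exI[of _ "map (\<lambda>b. (b, F b)) l @ xs"]) force
qed

lemma triangular_raise_degree:
  fixes xs :: "(('k::field ^ 'n::finite) \<times> (('n \<Rightarrow> nat) \<Rightarrow> 'k)) list"
  assumes "triangular m xs" and "0 \<notin> fst ` set xs" and "m \<le> m'"
  shows "\<exists>ys. triangular m' ys \<and> map fst ys = map fst xs"
  using assms
proof (induction m xs rule: triangular.induct)
  case (1 m)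
  then show ?case by simp
next
  case (2 m p F xs)
  then obtain ys where ys: "triangular m' ys" "map fst ys = map fst xs" by auto
  have "p \<noteq> 0" using "2.prems" by auto
  then obtain i where i: "p $ i \<noteq> 0" by (metis vec_eq_iff zero_index)
  have "form_function m (eval_form m F)" unfolding form_function_def using "2.prems" by auto
  then have "form_function (m + (m' - m)) (\<lambda>x. (x $ i) ^ (m' - m) * eval_form m F x)"
    by (rule form_function_mult_coord_power)
  moreover have "m + (m' - m) = m'" using "2.prems"(3) by simp
  ultimately obtain F' where F': "F' \<in> forms_deg m'"
    "\<forall>x. eval_form m' F' x = (x $ i) ^ (m' - m) * eval_form m F x"
    unfolding form_function_def by auto
  have "fst ` set ys = fst ` set xs" using ys(2) by (metis set_map)
  then have "triangular m' ((p, F') # ys)" using ys(1) F' "2.prems" i by auto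
  then show ?case using ys(2) by (intro exI[of _ "(p, F') # ys"]) simp
qed

section \<open>Linear semi-uniform position\<close>

lemma vec_independent_card_le:
  fixes S :: "('k::field ^ 'n::finite) set"
  assumes "vec.independent S"
  shows "finite S \<and> card S \<le> CARD('n)"
  using vec.independent_card_le_dim[OF subset_UNIV assms] vec.finiteI_independent[OF assms]
  by (simp add: card_cart_basis)

text \<open>All coordinates of x with respect to S vanish, since each is also its coordinate with
  respect to some S - {s}.\<close>

lemma independent_in_span_Diff_all_eq_0:
  fixes S :: "('k::field ^ 'n::finite) set"
  assumes "vec.independent S" and "x \<in> vec.span S" and "\<forall>s\<in>S. x \<in> vec.span (S - {s})"
  shows "x = 0"
proof -
  have "vec.representation S x s = 0" for s
  proof (cases "s \<in> S")
    case True
    then have "vec.representation S x s = vec.representation (S - {s}) x s"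
      using vec.representation_extend[OF assms(1), of x "S - {s}"] assms(3) by auto
    then show ?thesis using vec.representation_ne_zero[of "S - {s}" x s] by auto
  qed (use vec.representation_ne_zero in blast)
  then show ?thesis using vec.sum_nonzero_representation_eq[OF assms(1,2)] by simp
qed

locale linear_semi_uniform =
  fixes \<Gamma> :: "('k::field ^ 'n::finite) set" and \<nu> :: "nat \<Rightarrow> nat"
  assumes proj_point_set: "proj_point_set \<Gamma>" and span_Gamma: "vec.span \<Gamma> = UNIV"
    and card_span_points_eq: "\<And>i S. i \<le> CARD('n) - 1 \<Longrightarrow> S \<subseteq> \<Gamma> \<Longrightarrow> vec.independent S \<Longrightarrow>
        card S = i + 1 \<Longrightarrow> card {p\<in>\<Gamma>. p \<in> vec.span S} = \<nu> i"
begin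

definition span_points :: "('k ^ 'n) set \<Rightarrow> ('k ^ 'n) set" where
  "span_points S = {p\<in>\<Gamma>. p \<in> vec.span S}"

lemma finite_Gamma: "finite \<Gamma>"
  using proj_point_set proj_point_set_def by blast

lemma zero_notin_Gamma: "0 \<notin> \<Gamma>"
  using proj_point_set proj_point_set_def by blast

lemma span_points_subset: "span_points S \<subseteq> \<Gamma>"
  by (auto simp: span_points_def)

lemma finite_span_points: "finite (span_points S)"
  using finite_Gamma span_points_subset finite_subset by blast

lemma subset_span_points: "S \<subseteq> \<Gamma> \<Longrightarrow> S \<subseteq> span_points S"
  using vec.span_superset by (auto simp: span_points_def)

lemma span_points_mono: "S \<subseteq> T \<Longrightarrow> span_points S \<subseteq> span_points T"
  using vec.span_mono by (auto simp: span_points_def)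

lemma span_points_singleton: "s \<in> \<Gamma> \<Longrightarrow> span_points {s} = {s}"
  using proj_point_set subset_span_points[of "{s}"]
  by (auto simp: span_points_def vec.span_singleton proj_point_set_def)

lemma in_span_points_Diff:
  assumes "S \<subseteq> \<Gamma>" and "vec.independent S" and "s \<in> S"
  shows "s \<in> span_points S - span_points (S - {s})"
  using assms subset_span_points[OF assms(1)] vec.dependent_def by (auto simp: span_points_def)

lemma card_span_points:
  assumes "S \<subseteq> \<Gamma>" and "vec.independent S" and "card S = i + 1"
  shows "card (span_points S) = \<nu> i"
proof -
  have "i \<le> CARD('n) - 1" using vec_independent_card_le[OF assms(2)] assms(3) by linarith
  then show ?thesis using assms card_span_points_eq[of i S] by (simp add: span_points_def)
qed

lemma exists_independent_card:
  assumes "r \<le> CARD('n)"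
  shows "\<exists>S\<subseteq>\<Gamma>. vec.independent S \<and> card S = r"
proof -
  obtain B where B: "B \<subseteq> \<Gamma>" "vec.independent B" "\<Gamma> \<subseteq> vec.span B"
    using vec.maximal_independent_subset by blast
  then have "vec.span B = UNIV"
    using span_Gamma by (metis top.extremum_uniqueI vec.span_mono vec.span_span)
  then have "card B = CARD('n)"
    using vec.dim_span_eq_card_independent[OF B(2)] vec.dim_UNIV card_cart_basis by metis
  then obtain T where "T \<subseteq> B" "card T = r" using assms obtain_subset_with_card_n by metis
  then show ?thesis using B vec.independent_mono by blast
qed

lemma obtain_independent_card_Suc:
  assumes "i \<le> CARD('n) - 1"
  obtains S where "S \<subseteq> \<Gamma>" "vec.independent S" "card S = i + 1"
proof -
  have "i + 1 \<le> CARD('n)" using assms zero_less_card_finite[where 'a='n] by linarith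
  then show thesis using exists_independent_card that by blast
qed

lemma Suc_le_nu:
  assumes "i \<le> CARD('n) - 1"
  shows "i + 1 \<le> \<nu> i"
proof -
  obtain S where S: "S \<subseteq> \<Gamma>" "vec.independent S" "card S = i + 1"
    using obtain_independent_card_Suc[OF assms] .
  then have "card S \<le> card (span_points S)"
    using card_mono[OF finite_span_points subset_span_points] by blast
  then show ?thesis using card_span_points[OF S] S(3) by simp
qed

lemma nu_less_Suc:
  assumes "Suc j \<le> CARD('n) - 1"
  shows "\<nu> j < \<nu> (Suc j)"
proof -
  obtain S where S: "S \<subseteq> \<Gamma>" "vec.independent S" "card S = Suc j + 1"
    using obtain_independent_card_Suc[OF assms] .
  then obtain s where s: "s \<in> S" by fastforce
  have "card (span_points (S - {s})) < card (span_points S)"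
    using in_span_points_Diff[OF S(1,2) s] span_points_mono[of "S - {s}" S]
    by (intro psubset_card_mono finite_span_points) blast
  moreover have "card (span_points (S - {s})) = \<nu> j"
    using S s vec.independent_mono[OF S(2)] by (intro card_span_points) auto
  ultimately show ?thesis using card_span_points[OF S] by simp
qed

text \<open>If one more point of an independent set enlarges the span by a single point of \<Gamma>, then
  every point of the span outside S lies in all the spans of S minus one point, hence is 0.\<close>

lemma nu_Suc_eq_if_increment_one:
  assumes "Suc j \<le> CARD('n) - 1" and "\<nu> (Suc j) = \<nu> j + 1"
  shows "\<nu> (Suc j) = j + 2"
proof -
  obtain S where S: "S \<subseteq> \<Gamma>" "vec.independent S" "card S = Suc j + 1"
    using obtain_independent_card_Suc[OF assms(1)] .
  have Diff_eq: "span_points S - span_points (S - {s}) = {s}" if s: "s \<in> S" for s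
  proof -
    have "card (span_points (S - {s})) = \<nu> j"
      using S s vec.independent_mono[OF S(2)] by (intro card_span_points) auto
    then have "card (span_points S - span_points (S - {s})) = 1"
      using card_Diff_subset[OF finite_span_points span_points_mono[of "S - {s}" S]]
        card_span_points[OF S] assms(2) by auto
    then obtain y where "span_points S - span_points (S - {s}) = {y}"
      by (rule card_1_singletonE)
    then show ?thesis using in_span_points_Diff[OF S(1,2) s] by auto
  qed
  have "span_points S \<subseteq> S"
  proof
    fix x assume x: "x \<in> span_points S"
    show "x \<in> S"
    proof (rule ccontr)
      assume "x \<notin> S"
      have "\<forall>s\<in>S. x \<in> vec.span (S - {s})"
      proof
        fix s assume "s \<in> S"
        then have "x \<notin> span_points S - span_points (S - {s})"
          using Diff_eq \<open>x \<notin> S\<close> by auto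
        then show "x \<in> vec.span (S - {s})" using x by (auto simp: span_points_def)
      qed
      then have "x = 0" using independent_in_span_Diff_all_eq_0[OF S(2)] x by (auto simp: span_points_def)
      then show False using x zero_notin_Gamma span_points_subset by auto
    qed
  qed
  then have "span_points S = S" using subset_span_points[OF S(1)] by auto
  then show ?thesis using card_span_points[OF S] S(3) by simp
qed

lemma nu_excess_propagates:
  assumes "k + 2 \<le> \<nu> k" and "k \<le> j" and "j \<le> CARD('n) - 1"
  shows "2 * j - k + 2 \<le> \<nu> j"
proof -
  have "2 * (k + d) - k + 2 \<le> \<nu> (k + d)" if "k + d \<le> CARD('n) - 1" for d
    using that
  proof (induction d)
    case (Suc d)
    then have IH: "2 * (k + d) - k + 2 \<le> \<nu> (k + d)" and step: "\<nu> (k + d) < \<nu> (Suc (k + d))"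
      using nu_less_Suc[of "k + d"] by simp_all
    have "\<nu> (Suc (k + d)) \<noteq> \<nu> (k + d) + 1"
    proof
      assume "\<nu> (Suc (k + d)) = \<nu> (k + d) + 1"
      then have "\<nu> (Suc (k + d)) = k + d + 2"
        using nu_Suc_eq_if_increment_one[of "k + d"] Suc.prems by simp
      then show False using IH step by simp
    qed
    then show ?case using IH step by simp
  qed (use assms(1) in simp)
  from this[of "j - k"] show ?thesis using assms by simp
qed


lemma min_nu_Suc_le_increment:
  assumes "Suc r \<le> CARD('n) - 1"
  shows "min (\<nu> (Suc r)) (2 * Suc r + 1) \<le> \<nu> (Suc r) - \<nu> r + min (\<nu> r) (2 * r + 1)"
proof (cases "\<nu> (Suc r) = \<nu> r + 1")
  case True
  then show ?thesis using nu_Suc_eq_if_increment_one[OF assms] by simp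
next
  case False
  then show ?thesis using nu_less_Suc[OF assms] by (simp add: min_def) arith
qed

lemma nu_excess_bound:
  assumes "r \<le> CARD('n) - 1" and "2 \<le> k" and "k + 1 \<le> \<nu> (k - 1)"
  shows "2 * r + 3 \<le> k + min (\<nu> r) (2 * r + 1)"
proof (cases "k - 1 \<le> r")
  case True
  then have "2 * r - (k - 1) + 2 \<le> \<nu> r"
    using nu_excess_propagates[of "k - 1" r] assms by simp
  then show ?thesis using True assms(2) by simp
next
  case False
  then show ?thesis using Suc_le_nu[OF assms(1)] by simp
qed

text \<open>If B consists of all new points, count them; otherwise the span of B contains more
  than card B points of \<Gamma>, and this excess propagates up to \<nu> r.\<close>

lemma card_basis_new_points_bound:
  assumes "Suc r \<le> CARD('n) - 1" and S: "S \<subseteq> \<Gamma>" "vec.independent S" "card S = Suc r + 1"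
    and "s \<in> S"
    and B: "B \<subseteq> span_points S - span_points (S - {s})" "vec.independent B"
      "span_points S - span_points (S - {s}) \<subseteq> vec.span B"
  shows "min (\<nu> (Suc r)) (2 * Suc r + 1) \<le> card B + min (\<nu> r) (2 * r + 1)"
proof -
  define D where "D = span_points S - span_points (S - {s})"
  have "card (span_points (S - {s})) = \<nu> r"
    using S \<open>s \<in> S\<close> vec.independent_mono[OF S(2)] by (intro card_span_points) auto
  then have card_D: "card D = \<nu> (Suc r) - \<nu> r"
    using card_Diff_subset[OF finite_span_points span_points_mono[of "S - {s}" S]]
      card_span_points[OF S] by (auto simp: D_def)
  have "finite D" by (simp add: D_def finite_span_points)
  have "s \<in> vec.span B" using in_span_points_Diff[OF S(1,2) \<open>s \<in> S\<close>] B(3) by blast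
  then have "B \<noteq> {}" using zero_notin_Gamma S(1) \<open>s \<in> S\<close> by auto
  show ?thesis
  proof (cases "B = D")
    case True
    then show ?thesis using card_D min_nu_Suc_le_increment[OF assms(1)] by simp
  next
    case False
    then have card_B_less: "card B < card D"
      using B(1) \<open>finite D\<close> by (simp add: D_def psubset_card_mono psubsetI)
    have B_Gamma: "B \<subseteq> \<Gamma>" using B(1) span_points_subset by auto
    have D_sub: "D \<subseteq> span_points B" using B(3) span_points_subset by (auto simp: D_def span_points_def)
    have "card B \<noteq> 1"
    proof
      assume "card B = 1"
      then obtain b where "B = {b}" by (rule card_1_singletonE)
      then show False using D_sub span_points_singleton B_Gamma False B(1) by (auto simp: D_def)
    qed
    moreover have "card B \<noteq> 0"
      using \<open>B \<noteq> {}\<close> \<open>finite D\<close> B(1) finite_subset[of B D] by (simp add: D_def)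
    ultimately have "2 \<le> card B" by simp
    moreover have "card B + 1 \<le> \<nu> (card B - 1)"
      using card_B_less card_mono[OF finite_span_points D_sub]
        card_span_points[OF B_Gamma B(2), of "card B - 1"] calculation by simp
    ultimately have "2 * r + 3 \<le> card B + min (\<nu> r) (2 * r + 1)"
      using assms(1) by (intro nu_excess_bound) simp_all
    then show ?thesis by simp
  qed
qed

lemma exists_triangular_quadrics:
  assumes "r \<le> CARD('n) - 1" and "S \<subseteq> \<Gamma>" and "vec.independent S" and "card S = r + 1"
  shows "\<exists>xs. triangular 2 xs \<and> fst ` set xs \<subseteq> span_points S \<and> min (\<nu> r) (2 * r + 1) \<le> length xs"
  using assms
proof (induction r arbitrary: S)
  case 0
  then obtain s where S: "S = {s}" "s \<in> \<Gamma>" by (metis One_nat_def add_0 card_1_singletonE insert_subset)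
  then have "s \<notin> vec.span {}" using zero_notin_Gamma by auto
  then obtain xs where "triangular 2 xs" "fst ` set xs = {s}" "length xs = 1"
    using triangular_extend_independent[of "[]" "{}" "{s}"] by (auto simp: vec.independent_insert)
  then show ?case using S subset_span_points[of S] by (intro exI[of _ xs]) auto
next
  case (Suc r)
  then obtain s where s: "s \<in> S" by fastforce
  have S': "S - {s} \<subseteq> \<Gamma>" "vec.independent (S - {s})" "card (S - {s}) = r + 1"
    using Suc.prems s vec.independent_mono[OF Suc.prems(3)] by auto
  obtain xs where xs: "triangular 2 xs" "fst ` set xs \<subseteq> span_points (S - {s})"
    "min (\<nu> r) (2 * r + 1) \<le> length xs"
    using Suc.IH[OF _ S'] Suc.prems(1) by auto
  obtain B where B: "B \<subseteq> span_points S - span_points (S - {s})" "vec.independent B"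
    "span_points S - span_points (S - {s}) \<subseteq> vec.span B"
    using vec.maximal_independent_subset by blast
  have "\<forall>b\<in>B. b \<notin> vec.span (S - {s})" using B(1) by (auto simp: span_points_def)
  moreover have "fst ` set xs \<subseteq> vec.span (S - {s})" using xs(2) by (auto simp: span_points_def)
  moreover have "finite B" using B(1) finite_span_points finite_subset by blast
  ultimately obtain ys where ys: "triangular 2 ys" "fst ` set ys = B \<union> fst ` set xs"
    "length ys = card B + length xs"
    using triangular_extend_independent[OF xs(1) _ B(2)] by blast
  have "fst ` set ys \<subseteq> span_points S"
    using ys(2) B(1) xs(2) span_points_mono[of "S - {s}" S] by auto
  moreover have "min (\<nu> (Suc r)) (2 * Suc r + 1) \<le> length ys"
    using card_basis_new_points_bound[OF Suc.prems(1-3) _ s B] Suc.prems(4) ys(3) xs(3) by simp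
  ultimately show ?case using ys(1) by blast
qed

lemma exists_triangular_system:
  assumes "2 \<le> m"
  shows "\<exists>xs. triangular m xs \<and> fst ` set xs \<subseteq> \<Gamma> \<and> min (card \<Gamma>) (2 * (CARD('n) - 1) + 1) \<le> length xs"
proof -
  obtain S where S: "S \<subseteq> \<Gamma>" "vec.independent S" "card S = (CARD('n) - 1) + 1"
    using obtain_independent_card_Suc[of "CARD('n) - 1"] by blast
  have "UNIV \<subseteq> vec.span S"
    using vec.card_eq_dim[of S UNIV] S vec_independent_card_le[OF S(2)]
    by (simp add: vec.dim_UNIV card_cart_basis)
  then have "span_points S = \<Gamma>" by (auto simp: span_points_def)
  then obtain xs where xs: "triangular 2 xs" "fst ` set xs \<subseteq> \<Gamma>"
    "min (card \<Gamma>) (2 * (CARD('n) - 1) + 1) \<le> length xs"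
    using exists_triangular_quadrics[OF _ S] card_span_points[OF S] by auto
  moreover obtain ys where "triangular m ys" "map fst ys = map fst xs"
    using triangular_raise_degree[OF xs(1) _ assms] xs(2) zero_notin_Gamma by blast
  ultimately show ?thesis by (metis length_map set_map)
qed

lemma h0_ideal_sheaf_bounds:
  assumes "2 \<le> m"
  shows "h0_ideal_sheaf \<Gamma> m + min (card \<Gamma>) (2 * (CARD('n) - 1) + 1) \<le> card (monomials_deg m :: ('n \<Rightarrow> nat) set)"
    and "card \<Gamma> \<le> 2 * (CARD('n) - 1) + 1 \<Longrightarrow>
      h0_ideal_sheaf \<Gamma> m + card \<Gamma> = card (monomials_deg m :: ('n \<Rightarrow> nat) set)"
proof -
  obtain xs where xs: "triangular m xs" "fst ` set xs \<subseteq> \<Gamma>"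
    "min (card \<Gamma>) (2 * (CARD('n) - 1) + 1) \<le> length xs"
    using exists_triangular_system[OF assms] by blast
  have length_xs: "length xs = card (fst ` set xs)"
    using distinct_card[OF triangular_distinct[OF xs(1)]] by simp
  then have "length xs \<le> card \<Gamma>" using card_mono[OF finite_Gamma xs(2)] by simp
  note upper = h0_ideal_sheaf_add_length_le[OF xs(1,2)]
  show "h0_ideal_sheaf \<Gamma> m + min (card \<Gamma>) (2 * (CARD('n) - 1) + 1) \<le> card (monomials_deg m :: ('n \<Rightarrow> nat) set)"
    using upper xs(3) by simp
  assume "card \<Gamma> \<le> 2 * (CARD('n) - 1) + 1"
  then have "length xs = card \<Gamma>" using xs(3) \<open>length xs \<le> card \<Gamma>\<close> by simp
  then have "fst ` set xs = \<Gamma>" using length_xs xs(2) finite_Gamma by (metis card_subset_eq)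
  then show "h0_ideal_sheaf \<Gamma> m + card \<Gamma> = card (monomials_deg m :: ('n \<Rightarrow> nat) set)"
    using upper card_monomials_deg_le_h0_ideal_sheaf_add_length[OF xs(1)] \<open>length xs = card \<Gamma>\<close>
    by (metis le_antisym subset_refl)
qed

end

theorem corollary2p3:
  fixes \<Gamma> :: "('k::alg_closed_field ^ 'n) set" and c d :: nat
  assumes "c = CARD('n) - 1" and "c \<ge> 1"
    and "proj_point_set \<Gamma>" and "card \<Gamma> = d"
    and "linear_semi_uniform_position \<Gamma>"
  shows "(\<forall>m\<ge>2.
           (d \<le> 2*c+1 \<longrightarrow> int (h0_ideal_sheaf \<Gamma> m) = int ((c+m) choose m) - int d) \<and>
           (d \<ge> 2*c+2 \<longrightarrow> int (h0_ideal_sheaf \<Gamma> m) \<le> int ((c+m) choose m) - int (2*c+1)))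
       \<and> (d \<le> 2*c+1 \<longrightarrow> int (h0_ideal_sheaf \<Gamma> 2) = int ((c+1) choose 2) + int c + 1 - int d)
       \<and> (d \<ge> 2*c+2 \<longrightarrow> h0_ideal_sheaf \<Gamma> 2 \<le> c choose 2)"
proof -
  obtain \<nu> where "linear_semi_uniform \<Gamma> \<nu>"
    using assms(3,5) unfolding linear_semi_uniform_position_def linear_semi_uniform_def by blast
  then interpret linear_semi_uniform \<Gamma> \<nu> .
  have CARD_n: "CARD('n) = c + 1" using assms(1) by simp
  have "card (monomials_deg m :: ('n \<Rightarrow> nat) set) = (c + m) choose m" for m
    using card_monomials_deg[where 'n='n] by (simp add: CARD_n add.commute)
  then have bounds: "h0_ideal_sheaf \<Gamma> m + min d (2 * c + 1) \<le> (c + m) choose m"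
    "d \<le> 2 * c + 1 \<Longrightarrow> h0_ideal_sheaf \<Gamma> m + d = (c + m) choose m" if "2 \<le> m" for m
    using h0_ideal_sheaf_bounds[OF that] by (simp_all add: CARD_n assms(4))
  have general: "(d \<le> 2*c+1 \<longrightarrow> int (h0_ideal_sheaf \<Gamma> m) = int ((c+m) choose m) - int d) \<and>
      (d \<ge> 2*c+2 \<longrightarrow> int (h0_ideal_sheaf \<Gamma> m) \<le> int ((c+m) choose m) - int (2*c+1))"
    if "2 \<le> m" for m
    using bounds[OF that] by (auto simp: min_def)
  have "(c + 2 choose 2) = (c + 1 choose 2) + c + 1" "(c + 2 choose 2) = (c choose 2) + 2 * c + 1"
    by (simp_all add: numeral_2_eq_2)
  then show ?thesis using general bounds[of 2] by (auto simp: min_def)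
qed

end
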